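(* There exist constants $c(\beta)>0$ depending only on the integer $\beta\ge0$, and absolute constants $c_1,c_2,c_3,c_4>0$, such that for all $d\ge1$, $n\ge3$, $j\in\{1,\dots,d\}$, $h,s>0$, the following hold for $\boldsymbol X_1,\dots,\boldsymbol X_n$ i.i.d. from $p_\pi$: (1) if $\pi$ is supported on $[0,h]^d$, then $\mathbb E\big[(1+X_{j,\max})^\beta\prod_{k\ne j}(1+X_{k,\max})\big]\le c(\beta)\big(\max\{c_1,c_2h\}\frac{\log n}{\log\log n}\big)^{d-1+\beta}$; (2) if $\pi$ is supported on $[0,s\log n]^d$, then $\mathbb E\big[(1+X_{j,\max})^\beta\prod_{k\ne j}(1+X_{k,\max})\big]\le c(\beta)\big(\max\{c_3,c_4s\}\log n\big)^{d-1+\beta}$.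
   Context: Multidimensional Poisson mixture: $\boldsymbol\theta\sim\pi$ on $\mathbb R_+^d$, and given $\boldsymbol\theta$ the coordinates $X_k\sim\mathrm{Poi}(\theta_k)$ are independent; $p_\pi$ is the law of $\boldsymbol X$. $X_{k,\max}=\max_{1\le i\le n}X_{ik}$. *)

theory Defs
  imports "HOL-Probability.Probability"
begin

text \<open>Poisson probability mass function with mean theta >= 0 (theta = 0 gives the point mass at 0).\<close>
definition poi_pmf :: "real \<Rightarrow> nat \<Rightarrow> real" where
  "poi_pmf \<theta> k = \<theta> ^ k / fact k * exp (- \<theta>)"

text \<open>The multidimensional Poisson mixture p_pi on N^d: coordinates indexed by {..<d};
  pi is a measure on theta vectors (nat => real, product Borel sigma algebra on {..<d}).\<close>
definition pois_mixture :: "nat \<Rightarrow> (nat \<Rightarrow> real) measure \<Rightarrow> (nat \<Rightarrow> nat) measure" where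
  "pois_mixture d \<pi> =
     density (PiM {..<d} (\<lambda>_. count_space UNIV))
       (\<lambda>x. \<integral>\<^sup>+ \<theta>. ennreal (\<Prod>k<d. poi_pmf (\<theta> k) (x k)) \<partial>\<pi>)"

definition Xmax :: "nat \<Rightarrow> (nat \<Rightarrow> nat \<Rightarrow> nat) \<Rightarrow> nat \<Rightarrow> nat" where
  "Xmax n xs k = Max ((\<lambda>i. xs i k) ` {..<n})"

definition moment_max :: "nat \<Rightarrow> (nat \<Rightarrow> real) measure \<Rightarrow> nat \<Rightarrow> nat \<Rightarrow> nat \<Rightarrow> ennreal" where
  "moment_max d \<pi> n j \<beta> =
     (\<integral>\<^sup>+ xs. ennreal ((1 + real (Xmax n xs j)) ^ \<beta> *
                         (\<Prod>k\<in>{..<d} - {j}. (1 + real (Xmax n xs k))))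
       \<partial>(PiM {..<n} (\<lambda>_. pois_mixture d \<pi>)))"

end

theory Submission
  imports Defs
begin

text \<open>
  Fix a threshold \<open>T\<close> and bound each maximum by
  \<open>(1 + X\<^sub>k\<^sub>,\<^sub>m\<^sub>a\<^sub>x)^a \<le> (1 + T)^a + \<Sum>\<^sub>i (1 + X\<^sub>i\<^sub>k)^a [X\<^sub>i\<^sub>k \<ge> T]\<close>.
  Expanding the product over the coordinates, every term factorises over the independent samples,
  and within one sample the coordinates are independent Poisson variables given \<open>\<theta>\<close>.
  For a Poisson variable with mean at most \<open>h\<close> the tail moment
  \<open>E[(1 + X)^a; X \<ge> T]\<close> is at most \<open>2 a! e (2e\<^sup>2h/T)^T\<close>, so once
  \<open>2n (2e\<^sup>2h/T)^T \<le> 1\<close> every coordinate contributes a factor of order \<open>T\<close>.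
  Both bounds follow by choosing \<open>T\<close> of order \<open>max(1, h) log n / log log n\<close>,
  resp. \<open>max(1, s) log n\<close>.
\<close>

section \<open>Tail moments of the Poisson distribution\<close>

lemma power_div_fact_le_exp:
  fixes x :: real
  assumes "0 \<le> x"
  shows "x ^ n / fact n \<le> exp x"
proof -
  have exp_sums: "(\<lambda>i. x ^ i / fact i) sums exp x"
    using exp_converges[of x] by (simp add: divide_inverse mult.commute scaleR_conv_of_real)
  have "x ^ n / fact n \<le> (\<Sum>i<Suc n. x ^ i / fact i)"
    using assms by (simp add: sum_nonneg)
  also have "\<dots> \<le> exp x"
    using sum_le_suminf[OF sums_summable[OF exp_sums], of "{..<Suc n}"] assms sums_unique[OF exp_sums]
    by simp
  finally show ?thesis .
qed

lemma poi_pmf_nonneg: "0 \<le> \<theta> \<Longrightarrow> 0 \<le> poi_pmf \<theta> t"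
  unfolding poi_pmf_def by simp

lemma poi_pmf_sums: "(\<lambda>t. poi_pmf \<theta> t) sums 1"
proof -
  have "(\<lambda>t. \<theta> ^ t / fact t) sums exp \<theta>"
    using exp_converges[of \<theta>] by (simp add: divide_inverse mult.commute scaleR_conv_of_real)
  from sums_mult2[OF this, of "exp (- \<theta>)"] show ?thesis
    unfolding poi_pmf_def by (simp add: exp_minus)
qed

lemma nn_integral_poi_pmf:
  "0 \<le> \<theta> \<Longrightarrow> (\<integral>\<^sup>+t. ennreal (poi_pmf \<theta> t) \<partial>count_space UNIV) = 1"
  by (simp add: nn_integral_count_space_nat suminf_ennreal2 poi_pmf_nonneg
      sums_summable[OF poi_pmf_sums] sums_unique[OF poi_pmf_sums, symmetric])

definition tail_power :: "real \<Rightarrow> nat \<Rightarrow> nat \<Rightarrow> real" where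
  "tail_power T a t = (if T \<le> real t then (1 + real t) ^ a else 0)"

lemma tail_power_nonneg: "0 \<le> tail_power T a t"
  unfolding tail_power_def by simp

text \<open>Of the two factors \<open>e\<close> in \<open>2 e\<^sup>2 h\<close>, one comes from \<open>t^t / t! \<le> e^t\<close> and one from
  \<open>(1 + t)^a \<le> a! e^(1+t)\<close>; the factor \<open>2\<close> leaves the geometric weight \<open>(1/2)^t\<close> that
  makes the tail summable.\<close>

lemma poi_pmf_mult_tail_power_le:
  fixes h T \<theta> :: real
  assumes \<theta>: "0 \<le> \<theta>" "\<theta> \<le> h" and T: "1 \<le> T" "2 * exp 2 * h \<le> T"
  defines "q \<equiv> 2 * exp 2 * h / T"
  shows "poi_pmf \<theta> t * tail_power T a t \<le> fact a * exp 1 * q powr T * (1/2) ^ t"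
proof (cases "T \<le> real t")
  case False
  then show ?thesis by (simp add: tail_power_def)
next
  case True
  have t: "1 \<le> real t" using True T by linarith
  have q: "0 \<le> q" "q \<le> 1" using \<theta> T by (auto simp: q_def)
  have poi_le: "poi_pmf \<theta> t \<le> h ^ t / fact t"
  proof -
    have "\<theta> ^ t * exp (-\<theta>) \<le> h ^ t * 1"
      using \<theta> by (intro mult_mono power_mono) auto
    then show ?thesis unfolding poi_pmf_def by (simp add: divide_right_mono field_simps)
  qed
  have power_le: "(1 + real t) ^ a \<le> fact a * exp (1 + real t)"
    using power_div_fact_le_exp[of "1 + real t" a] by (simp add: field_simps)
  have geometric: "(exp 1 * h / real t) ^ t * exp (real t) \<le> q powr T * (1/2) ^ t"
  proof -
    have "(exp 1 * h / real t) ^ t * exp (real t) = (2 * exp 2 * h / real t) ^ t * (1/2) ^ t"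
      by (simp add: exp_of_nat_mult[symmetric] power_mult_distrib[symmetric] exp_add[of 1 1, simplified]
          field_simps)
    also have "(2 * exp 2 * h / real t) ^ t \<le> q ^ t"
      unfolding q_def using True \<theta> T by (intro power_mono divide_left_mono) auto
    also have "q ^ t = q powr real t"
      using q t by (cases "q = 0") (auto simp: powr_realpow)
    also have "\<dots> \<le> q powr T"
      using True q by (intro powr_mono') auto
    finally show ?thesis by simp
  qed
  have "poi_pmf \<theta> t * tail_power T a t = poi_pmf \<theta> t * (1 + real t) ^ a"
    using True by (simp add: tail_power_def)
  also have "\<dots> \<le> h ^ t / fact t * (fact a * exp (1 + real t))"
    using poi_le power_le \<theta> by (intro mult_mono) (auto simp: poi_pmf_nonneg)
  also have "\<dots> = fact a * exp 1 * ((exp 1 * h / real t) ^ t * (real t ^ t / fact t))"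
    using t by (simp add: exp_add exp_of_nat_mult[symmetric] field_simps)
  also have "\<dots> \<le> fact a * exp 1 * ((exp 1 * h / real t) ^ t * exp (real t))"
    using \<theta> t by (intro mult_left_mono power_div_fact_le_exp) auto
  also have "\<dots> \<le> fact a * exp 1 * (q powr T * (1/2) ^ t)"
    using geometric by (intro mult_left_mono) auto
  finally show ?thesis by (simp add: mult.assoc)
qed

lemma nn_integral_poi_tail_power_le:
  fixes h T \<theta> :: real
  assumes \<theta>: "0 \<le> \<theta>" "\<theta> \<le> h" and T: "1 \<le> T" "2 * exp 2 * h \<le> T"
  shows "(\<integral>\<^sup>+t. ennreal (poi_pmf \<theta> t) * ennreal (tail_power T a t) \<partial>count_space UNIV)
    \<le> ennreal (2 * fact a * exp 1 * (2 * exp 2 * h / T) powr T)"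
proof -
  define C where "C = fact a * exp 1 * (2 * exp 2 * h / T) powr T"
  have "(\<lambda>t::nat. C * (1/2) ^ t) sums (C * 2)"
    using sums_mult[OF geometric_sums[of "1/2::real"], of C] by simp
  moreover have "0 \<le> C" unfolding C_def by simp
  ultimately have "(\<integral>\<^sup>+t. ennreal (C * (1/2) ^ t) \<partial>count_space UNIV) = ennreal (2 * C)"
    by (simp add: nn_integral_count_space_nat suminf_ennreal2 sums_summable sums_unique[symmetric])
  moreover have "(\<integral>\<^sup>+t. ennreal (poi_pmf \<theta> t) * ennreal (tail_power T a t) \<partial>count_space UNIV)
      \<le> (\<integral>\<^sup>+t. ennreal (C * (1/2) ^ t) \<partial>count_space UNIV)"
  proof (intro nn_integral_mono)
    fix t
    have "ennreal (poi_pmf \<theta> t) * ennreal (tail_power T a t) = ennreal (poi_pmf \<theta> t * tail_power T a t)"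
      using \<theta> by (simp add: ennreal_mult poi_pmf_nonneg tail_power_nonneg)
    also have "\<dots> \<le> ennreal (C * (1/2) ^ t)"
      using poi_pmf_mult_tail_power_le[OF \<theta> T] by (simp add: C_def ennreal_leI)
    finally show "ennreal (poi_pmf \<theta> t) * ennreal (tail_power T a t) \<le> ennreal (C * (1/2) ^ t)" .
  qed
  ultimately show ?thesis by (simp add: C_def mult.assoc)
qed

section \<open>Poisson mixtures\<close>

lemma measurable_poi_pmf_coordinate:
  fixes \<pi> :: "(nat \<Rightarrow> real) measure"
  assumes S: "sets \<pi> = sets (PiM {..<d} (\<lambda>_. borel))" and k: "k < d"
  shows "(\<lambda>(x, \<theta>). poi_pmf (\<theta> k) (x k))
    \<in> borel_measurable (PiM {..<d} (\<lambda>_. count_space UNIV) \<Otimes>\<^sub>M \<pi>)"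
proof -
  have "(\<lambda>\<theta>. \<theta> k) \<in> borel_measurable \<pi>"
    using k by (subst measurable_cong_sets[OF S refl]) auto
  then have \<theta>: "(\<lambda>p. snd p k) \<in> borel_measurable (PiM {..<d} (\<lambda>_. count_space UNIV) \<Otimes>\<^sub>M \<pi>)"
    by (rule measurable_compose[OF measurable_snd])
  have x: "(\<lambda>p. fst p k)
      \<in> measurable (PiM {..<d} (\<lambda>_. count_space UNIV) \<Otimes>\<^sub>M \<pi>) (count_space UNIV)"
    by (rule measurable_compose[OF measurable_fst measurable_component_singleton]) (use k in auto)
  show ?thesis
    unfolding case_prod_beta'
    by (rule measurable_compose_countable[where f = "\<lambda>i p. poi_pmf (snd p k) i", OF _ x])
      (use \<theta> in \<open>unfold poi_pmf_def, measurable\<close>)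
qed

lemma nn_integral_pois_mixture_prod:
  fixes \<pi> :: "(nat \<Rightarrow> real) measure" and u :: "nat \<Rightarrow> nat \<Rightarrow> ennreal"
  assumes S: "sets \<pi> = sets (PiM {..<d} (\<lambda>_. borel))" and "sigma_finite_measure \<pi>"
    and nonneg: "AE \<theta> in \<pi>. \<forall>k<d. 0 \<le> \<theta> k"
  shows "(\<integral>\<^sup>+x. (\<Prod>k<d. u k (x k)) \<partial>pois_mixture d \<pi>) =
    (\<integral>\<^sup>+\<theta>. (\<Prod>k<d. \<integral>\<^sup>+t. ennreal (poi_pmf (\<theta> k) t) * u k t \<partial>count_space UNIV) \<partial>\<pi>)"
proof -
  define N where "N = PiM {..<d} (\<lambda>_. count_space (UNIV :: nat set))"
  interpret product_sigma_finite "\<lambda>_::nat. count_space (UNIV :: nat set)"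
    by (simp add: product_sigma_finite_def sigma_finite_measure_count_space)
  interpret N: finite_product_sigma_finite "\<lambda>_::nat. count_space (UNIV :: nat set)" "{..<d}"
    by standard auto
  interpret pair_sigma_finite N \<pi>
    unfolding pair_sigma_finite_def N_def using N.sigma_finite_measure_axioms assms(2) by simp
  have pmf_meas: "(\<lambda>(x, \<theta>). ennreal (\<Prod>k<d. poi_pmf (\<theta> k) (x k))) \<in> borel_measurable (N \<Otimes>\<^sub>M \<pi>)"
    unfolding N_def using measurable_poi_pmf_coordinate[OF S]
    by (simp add: case_prod_beta' borel_measurable_prod)
  have joint_meas: "(\<lambda>(x, \<theta>). \<Prod>k<d. ennreal (poi_pmf (\<theta> k) (x k)) * u k (x k))
      \<in> borel_measurable (N \<Otimes>\<^sub>M \<pi>)"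
    unfolding case_prod_beta'
  proof (rule borel_measurable_prod_ennreal)
    fix k assume k: "k \<in> {..<d}"
    then have "(\<lambda>p. poi_pmf (snd p k) (fst p k)) \<in> borel_measurable (N \<Otimes>\<^sub>M \<pi>)"
      using measurable_poi_pmf_coordinate[OF S] by (simp add: case_prod_beta' N_def)
    moreover have "(\<lambda>p. fst p k) \<in> measurable (N \<Otimes>\<^sub>M \<pi>) (count_space UNIV)"
      unfolding N_def
      by (rule measurable_compose[OF measurable_fst measurable_component_singleton]) (use k in auto)
    ultimately show "(\<lambda>p. ennreal (poi_pmf (snd p k) (fst p k)) * u k (fst p k))
        \<in> borel_measurable (N \<Otimes>\<^sub>M \<pi>)"
      by measurable
  qed
  have "(\<integral>\<^sup>+x. (\<Prod>k<d. u k (x k)) \<partial>pois_mixture d \<pi>) =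
      (\<integral>\<^sup>+x. (\<integral>\<^sup>+\<theta>. ennreal (\<Prod>k<d. poi_pmf (\<theta> k) (x k)) \<partial>\<pi>) * (\<Prod>k<d. u k (x k)) \<partial>N)"
    unfolding pois_mixture_def N_def[symmetric]
    by (rule nn_integral_density) (use pmf_meas in \<open>measurable, auto simp: N_def\<close>)
  also have "\<dots> = (\<integral>\<^sup>+x. \<integral>\<^sup>+\<theta>. (\<Prod>k<d. ennreal (poi_pmf (\<theta> k) (x k)) * u k (x k)) \<partial>\<pi> \<partial>N)"
  proof (intro nn_integral_cong)
    fix x assume "x \<in> space N"
    then have "(\<lambda>\<theta>. ennreal (\<Prod>k<d. poi_pmf (\<theta> k) (x k))) \<in> borel_measurable \<pi>"
      using measurable_Pair2[OF pmf_meas] by simp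
    then have "(\<integral>\<^sup>+\<theta>. ennreal (\<Prod>k<d. poi_pmf (\<theta> k) (x k)) \<partial>\<pi>) * (\<Prod>k<d. u k (x k)) =
        (\<integral>\<^sup>+\<theta>. ennreal (\<Prod>k<d. poi_pmf (\<theta> k) (x k)) * (\<Prod>k<d. u k (x k)) \<partial>\<pi>)"
      by (rule nn_integral_multc[symmetric])
    also have "\<dots> = (\<integral>\<^sup>+\<theta>. (\<Prod>k<d. ennreal (poi_pmf (\<theta> k) (x k)) * u k (x k)) \<partial>\<pi>)"
      using nonneg
    proof (intro nn_integral_cong_AE, eventually_elim)
      case (elim \<theta>)
      then have "ennreal (\<Prod>k<d. poi_pmf (\<theta> k) (x k)) = (\<Prod>k<d. ennreal (poi_pmf (\<theta> k) (x k)))"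
        by (intro prod_ennreal[symmetric]) (simp add: poi_pmf_nonneg)
      then show ?case by (simp add: prod.distrib)
    qed
    finally show "(\<integral>\<^sup>+\<theta>. ennreal (\<Prod>k<d. poi_pmf (\<theta> k) (x k)) \<partial>\<pi>) * (\<Prod>k<d. u k (x k)) =
        (\<integral>\<^sup>+\<theta>. (\<Prod>k<d. ennreal (poi_pmf (\<theta> k) (x k)) * u k (x k)) \<partial>\<pi>)" .
  qed
  also have "\<dots> = (\<integral>\<^sup>+\<theta>. \<integral>\<^sup>+x. (\<Prod>k<d. ennreal (poi_pmf (\<theta> k) (x k)) * u k (x k)) \<partial>N \<partial>\<pi>)"
    using Fubini'[OF joint_meas] by simp
  also have "\<dots> = (\<integral>\<^sup>+\<theta>. (\<Prod>k<d. \<integral>\<^sup>+t. ennreal (poi_pmf (\<theta> k) t) * u k t \<partial>count_space UNIV) \<partial>\<pi>)"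
    unfolding N_def by (intro nn_integral_cong product_nn_integral_prod) auto
  finally show ?thesis .
qed

lemma prob_space_pois_mixture:
  fixes \<pi> :: "(nat \<Rightarrow> real) measure"
  assumes S: "sets \<pi> = sets (PiM {..<d} (\<lambda>_. borel))" and "prob_space \<pi>"
    and nonneg: "AE \<theta> in \<pi>. \<forall>k<d. 0 \<le> \<theta> k"
  shows "prob_space (pois_mixture d \<pi>)"
proof
  interpret prob_space \<pi> by fact
  have "emeasure (pois_mixture d \<pi>) (space (pois_mixture d \<pi>)) = (\<integral>\<^sup>+x. (\<Prod>k<d. 1) \<partial>pois_mixture d \<pi>)"
    by simp
  also have "\<dots> = (\<integral>\<^sup>+\<theta>. (\<Prod>k<d. \<integral>\<^sup>+t. ennreal (poi_pmf (\<theta> k) t) * 1 \<partial>count_space UNIV) \<partial>\<pi>)"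
    by (rule nn_integral_pois_mixture_prod[OF S prob_space_imp_sigma_finite[OF prob_space_axioms] nonneg])
  also have "\<dots> = (\<integral>\<^sup>+\<theta>. 1 \<partial>\<pi>)"
    using nonneg by (intro nn_integral_cong_AE, eventually_elim) (simp add: nn_integral_poi_pmf)
  finally show "emeasure (pois_mixture d \<pi>) (space (pois_mixture d \<pi>)) = 1"
    by (simp add: emeasure_space_1)
qed

lemma nn_integral_pois_mixture_prod_le:
  fixes \<pi> :: "(nat \<Rightarrow> real) measure" and u :: "nat \<Rightarrow> nat \<Rightarrow> ennreal" and e :: "nat \<Rightarrow> ennreal"
  assumes S: "sets \<pi> = sets (PiM {..<d} (\<lambda>_. borel))" and "prob_space \<pi>"
    and bound: "AE \<theta> in \<pi>. \<forall>k<d. 0 \<le> \<theta> k \<and>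
      (\<integral>\<^sup>+t. ennreal (poi_pmf (\<theta> k) t) * u k t \<partial>count_space UNIV) \<le> e k"
  shows "(\<integral>\<^sup>+x. (\<Prod>k<d. u k (x k)) \<partial>pois_mixture d \<pi>) \<le> (\<Prod>k<d. e k)"
proof -
  interpret prob_space \<pi> by fact
  have "AE \<theta> in \<pi>. \<forall>k<d. 0 \<le> \<theta> k"
    using bound by eventually_elim auto
  then have "(\<integral>\<^sup>+x. (\<Prod>k<d. u k (x k)) \<partial>pois_mixture d \<pi>) =
      (\<integral>\<^sup>+\<theta>. (\<Prod>k<d. \<integral>\<^sup>+t. ennreal (poi_pmf (\<theta> k) t) * u k t \<partial>count_space UNIV) \<partial>\<pi>)"
    by (rule nn_integral_pois_mixture_prod[OF S prob_space_imp_sigma_finite[OF prob_space_axioms]])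
  also have "\<dots> \<le> (\<integral>\<^sup>+\<theta>. (\<Prod>k<d. e k) \<partial>\<pi>)"
    using bound by (intro nn_integral_mono_AE, eventually_elim) (auto intro: prod_mono_ennreal)
  finally show ?thesis
    by (simp add: emeasure_space_1)
qed

lemma nn_integral_pois_mixture_tail_power_le:
  fixes \<pi> :: "(nat \<Rightarrow> real) measure" and h T :: real and a :: "nat \<Rightarrow> nat"
  assumes S: "sets \<pi> = sets (PiM {..<d} (\<lambda>_. borel))" and "prob_space \<pi>"
    and support: "AE \<theta> in \<pi>. \<forall>k<d. 0 \<le> \<theta> k \<and> \<theta> k \<le> h"
    and T: "1 \<le> T" "2 * exp 2 * h \<le> T" and K: "K \<subseteq> {..<d}"
  shows "(\<integral>\<^sup>+x. (\<Prod>k\<in>K. ennreal (tail_power T (a k) (x k))) \<partial>pois_mixture d \<pi>)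
    \<le> (\<Prod>k\<in>K. ennreal (2 * fact (a k) * exp 1 * (2 * exp 2 * h / T) powr T))"
proof -
  have "(\<integral>\<^sup>+x. (\<Prod>k<d. if k \<in> K then ennreal (tail_power T (a k) (x k)) else 1) \<partial>pois_mixture d \<pi>)
      \<le> (\<Prod>k<d. if k \<in> K then ennreal (2 * fact (a k) * exp 1 * (2 * exp 2 * h / T) powr T) else 1)"
    using support
  proof (intro nn_integral_pois_mixture_prod_le[OF S \<open>prob_space \<pi>\<close>], eventually_elim)
    case (elim \<theta>)
    then show ?case
      using nn_integral_poi_tail_power_le[OF _ _ T] nn_integral_poi_pmf by auto
  qed
  then show ?thesis
    using K by (simp add: prod.inter_restrict[symmetric] Int_absorb1)
qed

section \<open>Products of sums over independent samples\<close>

lemma prod_option_case_group: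
  fixes a :: "'k \<Rightarrow> 'a::comm_monoid_mult"
  assumes "finite D" "finite I" "\<And>k. k \<in> D \<Longrightarrow> f k \<in> insert None (Some ` I)"
  shows "(\<Prod>k\<in>D. case f k of None \<Rightarrow> a k | Some i \<Rightarrow> b k i) =
    (\<Prod>k\<in>{k\<in>D. f k = None}. a k) * (\<Prod>i\<in>I. \<Prod>k\<in>{k\<in>D. f k = Some i}. b k i)"
proof -
  have "(\<Prod>k\<in>D. case f k of None \<Rightarrow> a k | Some i \<Rightarrow> b k i) =
      (\<Prod>c\<in>insert None (Some ` I). \<Prod>k\<in>{k\<in>D. f k = c}. case f k of None \<Rightarrow> a k | Some i \<Rightarrow> b k i)"
    using assms by (intro prod.group[symmetric]) auto
  also have "\<dots> = (\<Prod>c\<in>insert None (Some ` I). \<Prod>k\<in>{k\<in>D. f k = c}. case c of None \<Rightarrow> a k | Some i \<Rightarrow> b k i)"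
    by (intro prod.cong) auto
  finally show ?thesis
    using assms by (simp add: prod.reindex)
qed

text \<open>In the expansion, \<open>f k = None\<close> selects \<open>A k\<close> and \<open>f k = Some i\<close> selects \<open>g k i\<close>;
  grouping the coordinates by the selected index makes each term a product over the samples.\<close>

lemma prod_add_sum_expand:
  fixes A :: "'k \<Rightarrow> 'a::comm_semiring_1" and n :: nat
  assumes "finite D"
  shows "(\<Prod>k\<in>D. A k + (\<Sum>i<n. g k i)) =
    (\<Sum>f\<in>PiE D (\<lambda>_. insert None (Some ` {..<n})).
       (\<Prod>k\<in>{k\<in>D. f k = None}. A k) * (\<Prod>i<n. \<Prod>k\<in>{k\<in>D. f k = Some i}. g k i))"
proof -
  have "(\<Prod>k\<in>D. A k + (\<Sum>i<n. g k i)) =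
      (\<Prod>k\<in>D. \<Sum>c\<in>insert None (Some ` {..<n}). case c of None \<Rightarrow> A k | Some i \<Rightarrow> g k i)"
    by (simp add: sum.reindex)
  also have "\<dots> = (\<Sum>f\<in>PiE D (\<lambda>_. insert None (Some ` {..<n})).
      \<Prod>k\<in>D. case f k of None \<Rightarrow> A k | Some i \<Rightarrow> g k i)"
    using assms by (intro prod_sum_PiE) auto
  also have "\<dots> = (\<Sum>f\<in>PiE D (\<lambda>_. insert None (Some ` {..<n})).
      (\<Prod>k\<in>{k\<in>D. f k = None}. A k) * (\<Prod>i<n. \<Prod>k\<in>{k\<in>D. f k = Some i}. g k i))"
    using assms by (intro sum.cong refl prod_option_case_group) auto
  finally show ?thesis .
qed

lemma nn_integral_PiM_prod_sum_le:
  fixes M :: "'a measure" and G :: "'k \<Rightarrow> 'a \<Rightarrow> ennreal" and A \<epsilon> :: "'k \<Rightarrow> ennreal"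
  assumes "sigma_finite_measure M" and D: "finite D"
    and G: "\<And>k. k \<in> D \<Longrightarrow> G k \<in> borel_measurable M"
    and row: "\<And>K. K \<subseteq> D \<Longrightarrow> (\<integral>\<^sup>+x. (\<Prod>k\<in>K. G k x) \<partial>M) \<le> (\<Prod>k\<in>K. \<epsilon> k)"
  shows "(\<integral>\<^sup>+xs. (\<Prod>k\<in>D. A k + (\<Sum>i<n. G k (xs i))) \<partial>PiM {..<n} (\<lambda>_. M))
    \<le> (\<Prod>k\<in>D. A k + of_nat n * \<epsilon> k)"
proof -
  interpret product_sigma_finite "\<lambda>_::nat. M"
    using assms(1) by (simp add: product_sigma_finite_def)
  define F where "F = PiE D (\<lambda>_. insert None (Some ` {..<n}))"
  define B where "B f i = {k\<in>D. f k = Some i}" for f :: "'k \<Rightarrow> nat option" and i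
  define \<alpha> where "\<alpha> f = (\<Prod>k\<in>{k\<in>D. f k = None}. A k)" for f :: "'k \<Rightarrow> nat option"
  have B_meas: "(\<lambda>x. \<Prod>k\<in>B f i. G k x) \<in> borel_measurable M" for f i
    by (rule borel_measurable_prod_ennreal) (use G in \<open>auto simp: B_def\<close>)
  have meas: "(\<lambda>xs. \<Prod>i<n. \<Prod>k\<in>B f i. G k (xs i)) \<in> borel_measurable (PiM {..<n} (\<lambda>_. M))" for f
  proof (rule borel_measurable_prod_ennreal)
    fix i assume "i \<in> {..<n}"
    from measurable_compose[OF measurable_component_singleton[OF this] B_meas[of f i]]
    show "(\<lambda>xs. \<Prod>k\<in>B f i. G k (xs i)) \<in> borel_measurable (PiM {..<n} (\<lambda>_. M))" .
  qed
  have factor: "(\<integral>\<^sup>+xs. (\<Prod>i<n. \<Prod>k\<in>B f i. G k (xs i)) \<partial>PiM {..<n} (\<lambda>_. M)) =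
      (\<Prod>i<n. \<integral>\<^sup>+x. (\<Prod>k\<in>B f i. G k x) \<partial>M)" for f
    using product_nn_integral_prod[of "{..<n}" "\<lambda>i x. \<Prod>k\<in>B f i. G k x"] B_meas by simp
  have "(\<integral>\<^sup>+xs. (\<Prod>k\<in>D. A k + (\<Sum>i<n. G k (xs i))) \<partial>PiM {..<n} (\<lambda>_. M))
      = (\<Sum>f\<in>F. \<alpha> f * (\<Prod>i<n. \<integral>\<^sup>+x. (\<Prod>k\<in>B f i. G k x) \<partial>M))"
    unfolding prod_add_sum_expand[OF D] F_def[symmetric] \<alpha>_def[symmetric] B_def[symmetric]
    using meas by (subst nn_integral_sum) (auto simp: nn_integral_cmult factor)
  also have "\<dots> \<le> (\<Sum>f\<in>F. \<alpha> f * (\<Prod>i<n. \<Prod>k\<in>B f i. \<epsilon> k))"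
    by (intro sum_mono mult_left_mono prod_mono_ennreal row) (auto simp: B_def)
  also have "\<dots> = (\<Prod>k\<in>D. A k + (\<Sum>i<n. \<epsilon> k))"
    unfolding prod_add_sum_expand[OF D] F_def \<alpha>_def B_def ..
  finally show ?thesis
    by simp
qed

section \<open>Splitting the maxima at a threshold\<close>

lemma one_plus_Max_power_le:
  fixes x :: "'i \<Rightarrow> nat" and T :: real
  assumes "finite I" "I \<noteq> {}" "0 \<le> T"
  shows "(1 + real (Max (x ` I))) ^ a \<le> (T + 1) ^ a + (\<Sum>i\<in>I. tail_power T a (x i))"
proof -
  have "Max (x ` I) \<in> x ` I"
    using assms by (intro Max_in) auto
  then obtain i0 where i0: "i0 \<in> I" "Max (x ` I) = x i0"
    by auto
  show ?thesis
  proof (cases "T \<le> real (x i0)")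
    case True
    have "(1 + real (Max (x ` I))) ^ a = tail_power T a (x i0)"
      using True i0 by (simp add: tail_power_def)
    also have "\<dots> \<le> (\<Sum>i\<in>I. tail_power T a (x i))"
      using i0 assms by (intro member_le_sum) (auto simp: tail_power_nonneg)
    finally show ?thesis
      using assms by (simp add: add_increasing)
  next
    case False
    then have "(1 + real (Max (x ` I))) ^ a \<le> (T + 1) ^ a"
      using i0 by (intro power_mono) auto
    then show ?thesis
      by (simp add: add_increasing2 sum_nonneg tail_power_nonneg)
  qed
qed

lemma prod_one_plus_Xmax_le:
  fixes T :: real and a :: "nat \<Rightarrow> nat"
  assumes "1 \<le> n" "0 \<le> T"
  shows "ennreal (\<Prod>k<d. (1 + real (Xmax n xs k)) ^ a k)
    \<le> (\<Prod>k<d. ennreal ((T + 1) ^ a k) + (\<Sum>i<n. ennreal (tail_power T (a k) (xs i k))))"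
proof -
  have "(\<Prod>k<d. (1 + real (Xmax n xs k)) ^ a k)
      \<le> (\<Prod>k<d. (T + 1) ^ a k + (\<Sum>i<n. tail_power T (a k) (xs i k)))"
    unfolding Xmax_def using assms
    by (intro prod_mono conjI one_plus_Max_power_le[where I = "{..<n}", simplified])
      (auto simp: lessThan_empty_iff)
  moreover have "(\<Prod>k<d. ennreal ((T + 1) ^ a k) + (\<Sum>i<n. ennreal (tail_power T (a k) (xs i k)))) =
      ennreal (\<Prod>k<d. (T + 1) ^ a k + (\<Sum>i<n. tail_power T (a k) (xs i k)))"
    using assms by (simp add: tail_power_nonneg sum_nonneg prod_ennreal del: ennreal_plus
        add: ennreal_plus[symmetric])
  ultimately show ?thesis
    by (simp add: ennreal_leI)
qed

lemma prod_power_at: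
  fixes f :: "'k \<Rightarrow> 'a::comm_monoid_mult"
  assumes "finite D" "j \<in> D"
  shows "(\<Prod>k\<in>D. f k ^ (if k = j then \<beta> else 1)) = f j ^ \<beta> * (\<Prod>k\<in>D - {j}. f k)"
proof -
  have "(\<Prod>k\<in>D - {j}. f k ^ (if k = j then \<beta> else 1)) = (\<Prod>k\<in>D - {j}. f k)"
    by (intro prod.cong) auto
  then show ?thesis
    using assms by (simp add: prod.remove)
qed

lemma threshold_factor_le:
  fixes T q :: real
  assumes T: "1 \<le> T" and small: "2 * real n * q powr T \<le> 1"
  shows "(T + 1) ^ a + real n * (2 * fact a * exp 1 * q powr T) \<le> (1 + fact a * exp 1) * (2 * T) ^ a"
proof -
  have "2 * real n * q powr T \<le> (2 * T) ^ a"
    using small T one_le_power[of "2 * T" a] by linarith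
  then have "fact a * exp 1 * (2 * real n * q powr T) \<le> fact a * exp 1 * (2 * T) ^ a"
    by (intro mult_left_mono) auto
  moreover have "(T + 1) ^ a \<le> (2 * T) ^ a"
    using T by (intro power_mono) auto
  moreover have "real n * (2 * fact a * exp 1 * q powr T) = fact a * exp 1 * (2 * real n * q powr T)"
    by (simp add: mult_ac)
  moreover have "(1 + fact a * exp 1) * (2 * T) ^ a = (2 * T) ^ a + fact a * exp 1 * (2 * T) ^ a"
    by (simp add: distrib_right)
  ultimately show ?thesis
    by linarith
qed

lemma prod_threshold_factors_le:
  fixes T q :: real and \<beta> :: nat
  assumes j: "j < d" and T: "1 \<le> T" and small: "2 * real n * q powr T \<le> 1"
  defines "a \<equiv> \<lambda>k. if k = j then \<beta> else 1"
  shows "(\<Prod>k<d. (T + 1) ^ a k + real n * (2 * fact (a k) * exp 1 * q powr T))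
    \<le> (1 + fact \<beta> * exp 1) * (2 * (1 + exp 1) * T) ^ (d - 1 + \<beta>)"
proof -
  have "(\<Prod>k<d. (T + 1) ^ a k + real n * (2 * fact (a k) * exp 1 * q powr T))
      \<le> (\<Prod>k<d. (1 + fact (a k) * exp 1) * (2 * T) ^ a k)"
    using T by (intro prod_mono threshold_factor_le[OF T small] conjI) (auto intro: add_nonneg_nonneg)
  also have "\<dots> = (1 + fact \<beta> * exp 1) * (1 + exp 1) ^ (d - 1) * (2 * T) ^ (d - 1 + \<beta>)"
  proof -
    have "(\<Prod>k\<in>{..<d} - {j}. 1 + fact (a k) * exp 1) = (\<Prod>k\<in>{..<d} - {j}. 1 + exp 1)"
      by (intro prod.cong) (auto simp: a_def)
    then have constants: "(\<Prod>k<d. 1 + fact (a k) * exp 1) = (1 + fact \<beta> * exp 1) * (1 + exp 1) ^ (d - 1)"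
      using j by (simp add: prod.remove a_def)
    have "(\<Prod>k<d. (2 * T) ^ a k) = (2 * T) ^ \<beta> * (\<Prod>k\<in>{..<d} - {j}. 2 * T)"
      unfolding a_def by (rule prod_power_at) (use j in auto)
    also have "(\<Prod>k\<in>{..<d} - {j}. 2 * T) = (2 * T) ^ (d - 1)"
      using j by simp
    also have "(2 * T) ^ \<beta> * (2 * T) ^ (d - 1) = (2 * T) ^ (d - 1 + \<beta>)"
      by (simp only: power_add[symmetric] add.commute)
    finally have powers: "(\<Prod>k<d. (2 * T) ^ a k) = (2 * T) ^ (d - 1 + \<beta>)" .
    show ?thesis
      by (simp only: prod.distrib constants powers)
  qed
  also have "\<dots> \<le> (1 + fact \<beta> * exp 1) * (1 + exp 1) ^ (d - 1 + \<beta>) * (2 * T) ^ (d - 1 + \<beta>)"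
    using T by (intro mult_right_mono mult_left_mono power_increasing) auto
  also have "\<dots> = (1 + fact \<beta> * exp 1) * (2 * (1 + exp 1) * T) ^ (d - 1 + \<beta>)"
  proof -
    have "2 * (1 + exp 1) * T = (1 + exp 1) * (2 * T)"
      by (simp only: mult.commute mult.left_commute)
    then show ?thesis
      by (simp only: power_mult_distrib mult.assoc)
  qed
  finally show ?thesis .
qed

definition admissible_threshold :: "nat \<Rightarrow> real \<Rightarrow> real \<Rightarrow> bool" where
  "admissible_threshold n h T \<longleftrightarrow>
     1 \<le> T \<and> 2 * exp 2 * h \<le> T \<and> 2 * real n * (2 * exp 2 * h / T) powr T \<le> 1"

lemma moment_max_le_admissible_threshold:
  fixes \<pi> :: "(nat \<Rightarrow> real) measure" and h T :: real
  assumes n: "1 \<le> n" and j: "j < d" and P: "prob_space \<pi>"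
    and S: "sets \<pi> = sets (PiM {..<d} (\<lambda>_. borel))"
    and support: "AE \<theta> in \<pi>. \<forall>k<d. 0 \<le> \<theta> k \<and> \<theta> k \<le> h"
    and T: "admissible_threshold n h T"
  shows "moment_max d \<pi> n j \<beta> \<le> ennreal ((1 + fact \<beta> * exp 1) * (2 * (1 + exp 1) * T) ^ (d - 1 + \<beta>))"
proof -
  define a where "a k = (if k = j then \<beta> else 1)" for k
  define q where "q = 2 * exp 2 * h / T"
  define \<epsilon> where "\<epsilon> k = 2 * fact (a k) * exp 1 * q powr T" for k
  have T1: "1 \<le> T" and Th: "2 * exp 2 * h \<le> T" and small: "2 * real n * q powr T \<le> 1"
    using T by (auto simp: admissible_threshold_def q_def)
  have \<epsilon>: "0 \<le> \<epsilon> k" for k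
    by (simp add: \<epsilon>_def)
  have nonneg: "AE \<theta> in \<pi>. \<forall>k<d. 0 \<le> \<theta> k"
    using support by eventually_elim auto
  have "moment_max d \<pi> n j \<beta> = (\<integral>\<^sup>+xs. ennreal (\<Prod>k<d. (1 + real (Xmax n xs k)) ^ a k)
      \<partial>PiM {..<n} (\<lambda>_. pois_mixture d \<pi>))"
    unfolding moment_max_def a_def using j by (simp add: prod_power_at)
  also have "\<dots> \<le> (\<integral>\<^sup>+xs. (\<Prod>k<d. ennreal ((T + 1) ^ a k) +
      (\<Sum>i<n. ennreal (tail_power T (a k) (xs i k)))) \<partial>PiM {..<n} (\<lambda>_. pois_mixture d \<pi>))"
    using n T1 by (intro nn_integral_mono prod_one_plus_Xmax_le) auto
  also have "\<dots> \<le> (\<Prod>k<d. ennreal ((T + 1) ^ a k) + of_nat n * ennreal (\<epsilon> k))"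
  proof (rule nn_integral_PiM_prod_sum_le[OF _ finite_lessThan])
    show "sigma_finite_measure (pois_mixture d \<pi>)"
      by (intro prob_space_imp_sigma_finite prob_space_pois_mixture[OF S P nonneg])
    show "(\<lambda>x. ennreal (tail_power T (a k) (x k))) \<in> borel_measurable (pois_mixture d \<pi>)"
      if "k \<in> {..<d}" for k
      using that unfolding pois_mixture_def by measurable
    show "(\<integral>\<^sup>+x. (\<Prod>k\<in>K. ennreal (tail_power T (a k) (x k))) \<partial>pois_mixture d \<pi>) \<le> (\<Prod>k\<in>K. ennreal (\<epsilon> k))"
      if "K \<subseteq> {..<d}" for K
      unfolding \<epsilon>_def q_def by (rule nn_integral_pois_mixture_tail_power_le[OF S P support T1 Th that])
  qed
  also have "\<dots> = ennreal (\<Prod>k<d. (T + 1) ^ a k + real n * \<epsilon> k)"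
    using T1 \<epsilon> by (subst prod_ennreal[symmetric]) (auto simp: ennreal_of_nat_eq_real_of_nat ennreal_mult)
  also have "\<dots> \<le> ennreal ((1 + fact \<beta> * exp 1) * (2 * (1 + exp 1) * T) ^ (d - 1 + \<beta>))"
    unfolding \<epsilon>_def a_def by (intro ennreal_leI prod_threshold_factors_le[OF j T1 small])
  finally show ?thesis .
qed

section \<open>Choice of the threshold\<close>

lemma one_less_ln: "3 \<le> n \<Longrightarrow> 1 < ln (real n)"
proof -
  assume n: "3 \<le> n"
  then have "exp 1 < real n"
    using e_less_272 by simp
  then show ?thesis
    using ln_less_cancel_iff[of "exp 1" "real n"] n by auto
qed

lemma exp_neg_two_ln:
  fixes x :: real
  assumes "0 < x" shows "exp (- (2 * ln x)) = 1 / x ^ 2"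
proof -
  have "exp (2 * ln x) = exp (ln x) * exp (ln x)"
    by (simp only: mult_2 exp_add)
  then show ?thesis
    using assms by (simp add: exp_minus power2_eq_square inverse_eq_divide)
qed

lemma two_n_mul_powr_le_one:
  fixes r b T T0 :: real
  assumes n: "3 \<le> n" and r: "0 \<le> r" "r \<le> b" and b: "0 < b" "b \<le> 1" and T0: "0 \<le> T0" "T0 \<le> T"
    and base: "b powr T0 \<le> exp (- (2 * ln (real n)))"
  shows "2 * real n * r powr T \<le> 1"
proof -
  have "r powr T \<le> b powr T"
    using r T0 by (intro powr_mono2) auto
  also have "\<dots> \<le> b powr T0"
    using b T0 by (intro powr_mono') auto
  also have "\<dots> \<le> 1 / real n ^ 2"
    using base n exp_neg_two_ln[of "real n"] by simp
  finally have "2 * real n * r powr T \<le> 2 * real n * (1 / real n ^ 2)"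
    by (intro mult_left_mono) auto
  also have "\<dots> \<le> 1"
    using n by (simp add: power2_eq_square field_simps)
  finally show ?thesis .
qed

lemma admissible_threshold_loglog:
  fixes h :: real
  assumes n: "3 \<le> n" and h: "0 < h"
  shows "admissible_threshold n h (max 4 (2 * exp 3 * h) * (ln (real n) / ln (ln (real n))))"
proof -
  define x where "x = ln (real n)"
  define L where "L = x / ln x"
  define T where "T = max 4 (2 * exp 3 * h) * L"
  have x: "1 < x"
    using one_less_ln[OF n] by (simp add: x_def)
  have lnx: "0 < ln x" "ln x \<le> x - 1"
    using x ln_le_minus_one[of x] by auto
  have L: "1 \<le> L"
    unfolding L_def using lnx by simp
  have T: "4 * L \<le> T" "2 * exp 3 * h * L \<le> T"
    unfolding T_def using L by (auto intro: mult_right_mono)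
  have e: "exp 3 = exp 1 * exp (2::real)"
    by (simp add: exp_add[symmetric])
  have "2 * exp 2 * h / T \<le> 2 * exp 2 * h / (2 * exp 3 * h * L)"
    using h L T by (intro divide_left_mono) auto
  also have "\<dots> = 1 / (exp 1 * L)"
    using h L by (simp add: e)
  finally have r: "2 * exp 2 * h / T \<le> 1 / (exp 1 * L)" .
  \<comment> \<open>\<open>L ln L \<approx> ln n\<close> is what makes \<open>(c/L)^(4L)\<close> smaller than \<open>1/n\<^sup>2\<close>.\<close>
  have "x / 2 \<le> L * (1 + ln L)"
  proof -
    have "ln (ln x) \<le> ln x / 2 + ln 2 - 1"
      using ln_le_minus_one[of "ln x / 2"] lnx by (simp add: ln_div)
    then have "ln x / 2 \<le> 1 + ln L"
      using lnx ln_2_less_1 by (simp add: L_def ln_div)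
    then have "L * (ln x / 2) \<le> L * (1 + ln L)"
      using L by (intro mult_left_mono) auto
    then show ?thesis
      using lnx by (simp add: L_def)
  qed
  then have base: "(1 / (exp 1 * L)) powr (4 * L) \<le> exp (- (2 * x))"
    using L by (simp add: powr_def ln_div ln_mult algebra_simps)
  have eL: "1 \<le> exp 1 * L"
    using L mult_mono[of 1 "exp 1" 1 L] by simp
  have "2 * real n * (2 * exp 2 * h / T) powr T \<le> 1"
    by (rule two_n_mul_powr_le_one[OF n _ r _ _ _ T(1)])
      (use h L T eL base in \<open>auto simp: x_def\<close>)
  moreover have "2 * exp 2 * h * 1 \<le> 2 * exp 3 * h * L"
    using h L by (intro mult_mono mult_right_mono) auto
  ultimately show ?thesis
    using T L unfolding admissible_threshold_def x_def[symmetric] L_def[symmetric] T_def[symmetric]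
    by auto
qed

lemma admissible_threshold_log:
  fixes s :: real
  assumes n: "3 \<le> n" and s: "0 < s"
  shows "admissible_threshold n (s * ln (real n)) (max 2 (2 * exp 3 * s) * ln (real n))"
proof -
  define x where "x = ln (real n)"
  define T where "T = max 2 (2 * exp 3 * s) * x"
  have x: "1 < x"
    using one_less_ln[OF n] by (simp add: x_def)
  have T: "2 * x \<le> T" "2 * exp 3 * s * x \<le> T"
    unfolding T_def using x by (auto intro: mult_right_mono)
  have e: "exp 3 = exp 1 * exp (2::real)"
    by (simp add: exp_add[symmetric])
  have "2 * exp 2 * (s * x) / T \<le> 2 * exp 2 * (s * x) / (2 * exp 3 * s * x)"
    using s x T by (intro divide_left_mono) auto
  also have "\<dots> = 1 / exp 1"
    using s x by (simp add: e)
  finally have r: "2 * exp 2 * (s * x) / T \<le> 1 / exp 1" .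
  have "2 * real n * (2 * exp 2 * (s * x) / T) powr T \<le> 1"
    by (rule two_n_mul_powr_le_one[OF n _ r _ _ _ T(1)]) (use s x T in \<open>auto simp: x_def powr_def ln_div\<close>)
  moreover have "2 * exp 2 * (s * x) \<le> 2 * exp 3 * s * x"
    using s x by simp
  ultimately show ?thesis
    using T x unfolding admissible_threshold_def x_def[symmetric] T_def[symmetric] by auto
qed

lemma moment_max_le_loglog:
  fixes \<pi> :: "(nat \<Rightarrow> real) measure" and h :: real
  assumes n: "3 \<le> n" and j: "j < d" and P: "prob_space \<pi>"
    and S: "sets \<pi> = sets (PiM {..<d} (\<lambda>_. borel))" and h: "0 < h"
    and support: "AE \<theta> in \<pi>. \<forall>k<d. 0 \<le> \<theta> k \<and> \<theta> k \<le> h"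
  shows "moment_max d \<pi> n j \<beta> \<le> ennreal ((1 + fact \<beta> * exp 1) *
    (max (8 * (1 + exp 1)) (4 * exp 3 * (1 + exp 1) * h) * ln (real n) / ln (ln (real n))) ^ (d - 1 + \<beta>))"
proof -
  have "2 * (1 + exp 1) * max 4 (2 * exp 3 * h) = max (8 * (1 + exp 1)) (4 * exp 3 * (1 + exp 1) * h)"
    by (simp add: max_mult_distrib_left add_pos_nonneg algebra_simps)
  then have eq: "2 * (1 + exp 1) * (max 4 (2 * exp 3 * h) * (ln (real n) / ln (ln (real n)))) =
      max (8 * (1 + exp 1)) (4 * exp 3 * (1 + exp 1) * h) * ln (real n) / ln (ln (real n))"
    by (metis mult.assoc times_divide_eq_right)
  have bound: "moment_max d \<pi> n j \<beta> \<le> ennreal ((1 + fact \<beta> * exp 1) *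
      (2 * (1 + exp 1) * (max 4 (2 * exp 3 * h) * (ln (real n) / ln (ln (real n))))) ^ (d - 1 + \<beta>))"
    using n by (intro moment_max_le_admissible_threshold[OF _ j P S support admissible_threshold_loglog[OF n h]])
      simp
  show ?thesis
    using bound unfolding eq .
qed

lemma moment_max_le_log:
  fixes \<pi> :: "(nat \<Rightarrow> real) measure" and s :: real
  assumes n: "3 \<le> n" and j: "j < d" and P: "prob_space \<pi>"
    and S: "sets \<pi> = sets (PiM {..<d} (\<lambda>_. borel))" and s: "0 < s"
    and support: "AE \<theta> in \<pi>. \<forall>k<d. 0 \<le> \<theta> k \<and> \<theta> k \<le> s * ln (real n)"
  shows "moment_max d \<pi> n j \<beta> \<le> ennreal ((1 + fact \<beta> * exp 1) *
    (max (4 * (1 + exp 1)) (4 * exp 3 * (1 + exp 1) * s) * ln (real n)) ^ (d - 1 + \<beta>))"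
proof -
  have "2 * (1 + exp 1) * max 2 (2 * exp 3 * s) = max (4 * (1 + exp 1)) (4 * exp 3 * (1 + exp 1) * s)"
    by (simp add: max_mult_distrib_left add_pos_nonneg algebra_simps)
  then have eq: "2 * (1 + exp 1) * (max 2 (2 * exp 3 * s) * ln (real n)) =
      max (4 * (1 + exp 1)) (4 * exp 3 * (1 + exp 1) * s) * ln (real n)"
    by (metis mult.assoc)
  have bound: "moment_max d \<pi> n j \<beta> \<le> ennreal ((1 + fact \<beta> * exp 1) *
      (2 * (1 + exp 1) * (max 2 (2 * exp 3 * s) * ln (real n))) ^ (d - 1 + \<beta>))"
    using n by (intro moment_max_le_admissible_threshold[OF _ j P S support admissible_threshold_log[OF n s]])
      simp
  show ?thesis
    using bound unfolding eq .
qed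

theorem lemma8:
  shows "\<exists>c :: nat \<Rightarrow> real. (\<forall>\<beta>. c \<beta> > 0) \<and>
    (\<exists>c1 c2 c3 c4 :: real. c1 > 0 \<and> c2 > 0 \<and> c3 > 0 \<and> c4 > 0 \<and>
      (\<forall>(d::nat) (n::nat) (j::nat) (\<beta>::nat) (\<pi>::(nat \<Rightarrow> real) measure).
         d \<ge> 1 \<longrightarrow> n \<ge> 3 \<longrightarrow> j < d \<longrightarrow>
         prob_space \<pi> \<longrightarrow> sets \<pi> = sets (PiM {..<d} (\<lambda>_. borel)) \<longrightarrow>
         (\<forall>h::real. h > 0 \<longrightarrow>
            (AE \<theta> in \<pi>. \<forall>k<d. 0 \<le> \<theta> k \<and> \<theta> k \<le> h) \<longrightarrow>
            moment_max d \<pi> n j \<beta> \<le>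
              ennreal (c \<beta> * (max c1 (c2 * h) * ln (real n) / ln (ln (real n))) ^ (d - 1 + \<beta>))) \<and>
         (\<forall>s::real. s > 0 \<longrightarrow>
            (AE \<theta> in \<pi>. \<forall>k<d. 0 \<le> \<theta> k \<and> \<theta> k \<le> s * ln (real n)) \<longrightarrow>
            moment_max d \<pi> n j \<beta> \<le>
              ennreal (c \<beta> * (max c3 (c4 * s) * ln (real n)) ^ (d - 1 + \<beta>)))))"
proof -
  have c: "\<forall>\<beta>::nat. 0 < 1 + fact \<beta> * exp (1::real)" and E: "0 < 1 + exp (1::real)"
    by (simp_all add: add_pos_nonneg)
  show ?thesis
    by (rule exI[of _ "\<lambda>\<beta>. 1 + fact \<beta> * exp 1"], rule conjI[OF c],
        rule exI[of _ "8 * (1 + exp 1)"], rule exI[of _ "4 * exp 3 * (1 + exp 1)"],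
        rule exI[of _ "4 * (1 + exp 1)"], rule exI[of _ "4 * exp 3 * (1 + exp 1)"])
      (intro conjI allI impI; (use E in \<open>simp; fail\<close>)?;
        rule moment_max_le_loglog moment_max_le_log; assumption)
qed

end
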